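(* Consider the learning-to-search procedure described in the context with roll-out policy equal to the reference policy ($\pi^{\mathrm{out}}=\pi^{\mathrm{ref}}$). Then there is a distribution $\mathcal D$ over $(x,y)$ (together with a search space, features, policy class and reference policy) such that the induced online cost-sensitive regret satisfies $\mathrm{Regret}^{\mathrm{CS}}_M=o(M)$, but the averaged learned policy $\bar\pi$ has arbitrarily large structured regret to one-step deviations, i.e. $J(\bar\pi)-J(\pi')$ can be arbitrarily large for some one-step deviation $\pi'$ of $\bar\pi$.
   Context: Structured prediction / learning-to-search setting: a distribution $\mathcal D$ over $(x,y)$; each $x$ induces a search space with start state $b$, deterministic transitions on (state, action) pairs, trajectories of exactly $T$ actions ending in end states $e$ with nonnegative losses $\ell(e)$. Policies choose actions as a function of state features $\Phi(s)$ and belong to a class $\Pi$; a reference policy $\pi^{\mathrm{ref}}$ is given (not assumed optimal). $J(\pi)$ is the expected loss of the end state reached by following $\pi$. A one-step deviation of a policy $\pi$ is a policy obtained from $\pi$ by changing a single one of its decisions; a policy is locally optimal if no one-step deviation has smaller $J$. Generic procedure with roll-in policy $\pi^{\mathrm{in}}$ (the current learned policy) and roll-out policy $\pi^{\mathrm{out}}$: for each example and each $t\in\{0,\dots,T-1\}$, execute $\pi^{\mathrm{in}}$ for $t$ steps to reach $s_t$; for each $a\in A(s_t)$ take $a$ and complete the trajectory with $\pi^{\mathrm{out}}$, reaching $e(a)$; form the cost-sensitive example with features $\Phi(s_t)$ and costs $c(a)=\ell(e(a))-\min_{a'}\ell(e(a'))$. These are given to an online cost-sensitive learner producing learned policies;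 the averaged policy $\bar\pi$ picks one uniformly at random. $\mathrm{Regret}^{\mathrm{CS}}_M$ is the learner's cumulative cost on the $M$ generated examples minus that of the best fixed policy in $\Pi$. *)

theory Defs
  imports "HOL-Probability.Probability_Mass_Function" "HOL-Library.Landau_Symbols"
begin

text \<open>Examples e stand for pairs (x,y), drawn from the pmf
  l2s_D. Each example induces a search space: start state, available actions,
  deterministic transitions, horizon T, losses of end states, state features, the
  policy class (policies are functions of the features) and the reference policy
  (which may depend on the whole example, including y).\<close>

record ('e, 's, 'a, 'f) l2s =
  l2s_D     :: "'e pmf"
  l2s_start :: "'e \<Rightarrow> 's"
  l2s_acts  :: "'e \<Rightarrow> 's \<Rightarrow> 'a set"
  l2s_trans :: "'e \<Rightarrow> 's \<Rightarrow> 'a \<Rightarrow> 's"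
  l2s_T     :: nat
  l2s_loss  :: "'e \<Rightarrow> 's \<Rightarrow> real"
  l2s_feat  :: "'e \<Rightarrow> 's \<Rightarrow> 'f"
  l2s_Pi    :: "('f \<Rightarrow> 'a) set"
  l2s_ref   :: "'e \<Rightarrow> 's \<Rightarrow> 'a"

definition wf_l2s :: "('e, 's, 'a, 'f) l2s \<Rightarrow> bool" where
  "wf_l2s I \<longleftrightarrow>
     finite (set_pmf (l2s_D I)) \<and>
     (\<forall>e s. finite (l2s_acts I e s) \<and> l2s_acts I e s \<noteq> {}) \<and>
     (\<forall>e s. l2s_ref I e s \<in> l2s_acts I e s) \<and>
     l2s_Pi I \<noteq> {} \<and>
     (\<forall>\<pi>\<in>l2s_Pi I. \<forall>e s. \<pi> (l2s_feat I e s) \<in> l2s_acts I e s) \<and>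
     (\<forall>e s. 0 \<le> l2s_loss I e s)"

fun steps :: "('s \<Rightarrow> 'a \<Rightarrow> 's) \<Rightarrow> ('s \<Rightarrow> 'a) \<Rightarrow> nat \<Rightarrow> 's \<Rightarrow> 's" where
  "steps tr p 0 s = s"
| "steps tr p (Suc n) s = steps tr p n (tr s (p s))"

definition act :: "('e, 's, 'a, 'f) l2s \<Rightarrow> 'e \<Rightarrow> ('f \<Rightarrow> 'a) \<Rightarrow> 's \<Rightarrow> 'a" where
  "act I e \<pi> s = \<pi> (l2s_feat I e s)"

definition end_state :: "('e, 's, 'a, 'f) l2s \<Rightarrow> 'e \<Rightarrow> ('f \<Rightarrow> 'a) \<Rightarrow> 's" where
  "end_state I e \<pi> = steps (l2s_trans I e) (act I e \<pi>) (l2s_T I) (l2s_start I e)"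

definition J :: "('e, 's, 'a, 'f) l2s \<Rightarrow> ('f \<Rightarrow> 'a) \<Rightarrow> real" where
  "J I \<pi> = measure_pmf.expectation (l2s_D I) (\<lambda>e. l2s_loss I e (end_state I e \<pi>))"

definition dev_end_state ::
  "('e, 's, 'a, 'f) l2s \<Rightarrow> 'e \<Rightarrow> ('f \<Rightarrow> 'a) \<Rightarrow> nat \<Rightarrow> ('f \<Rightarrow> 'a) \<Rightarrow> 's" where
  "dev_end_state I e \<pi> t h =
     (let st = steps (l2s_trans I e) (act I e \<pi>) t (l2s_start I e)
      in steps (l2s_trans I e) (act I e \<pi>) (l2s_T I - Suc t)
               (l2s_trans I e st (act I e h st)))"

definition J_dev :: "('e, 's, 'a, 'f) l2s \<Rightarrow> ('f \<Rightarrow> 'a) \<Rightarrow> nat \<Rightarrow> ('f \<Rightarrow> 'a) \<Rightarrow> real" where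
  "J_dev I \<pi> t h = measure_pmf.expectation (l2s_D I) (\<lambda>e. l2s_loss I e (dev_end_state I e \<pi> t h))"

text \<open>Averaged policy over the first N learned policies (pick one uniformly at random,
  then follow it), and its one-step deviation.\<close>
definition J_avg :: "('e, 's, 'a, 'f) l2s \<Rightarrow> (nat \<Rightarrow> 'f \<Rightarrow> 'a) \<Rightarrow> nat \<Rightarrow> real" where
  "J_avg I pols N = (\<Sum>i<N. J I (pols i)) / real N"

definition J_avg_dev ::
  "('e, 's, 'a, 'f) l2s \<Rightarrow> (nat \<Rightarrow> 'f \<Rightarrow> 'a) \<Rightarrow> nat \<Rightarrow> nat \<Rightarrow> ('f \<Rightarrow> 'a) \<Rightarrow> real" where
  "J_avg_dev I pols N t h = (\<Sum>i<N. J_dev I (pols i) t h) / real N"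

definition cs_example ::
  "('e, 's, 'a, 'f) l2s \<Rightarrow> 'e \<Rightarrow> ('f \<Rightarrow> 'a) \<Rightarrow> nat \<Rightarrow> 'f \<times> ('a \<Rightarrow> real)" where
  "cs_example I e \<pi> t =
     (let st = steps (l2s_trans I e) (act I e \<pi>) t (l2s_start I e);
          L = (\<lambda>a. l2s_loss I e (steps (l2s_trans I e) (l2s_ref I e) (l2s_T I - Suc t)
                                    (l2s_trans I e st a)))
      in (l2s_feat I e st, \<lambda>a. L a - Min (L ` l2s_acts I e st)))"

text \<open>The policy used for roll-in on the n-th structured example is the learner's
  output on all cost-sensitive examples generated from examples 0..n-1.\<close>
type_synonym ('f, 'a) learner = "('f \<times> ('a \<Rightarrow> real)) list \<Rightarrow> ('f \<Rightarrow> 'a)"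

fun history ::
  "('e, 's, 'a, 'f) l2s \<Rightarrow> ('f, 'a) learner \<Rightarrow> (nat \<Rightarrow> 'e) \<Rightarrow> nat \<Rightarrow> ('f \<times> ('a \<Rightarrow> real)) list" where
  "history I L xs 0 = []"
| "history I L xs (Suc n) = history I L xs n @
     map (cs_example I (xs n) (L (history I L xs n))) [0..<l2s_T I]"

definition learned :: "('e, 's, 'a, 'f) l2s \<Rightarrow> ('f, 'a) learner \<Rightarrow> (nat \<Rightarrow> 'e) \<Rightarrow> nat \<Rightarrow> ('f \<Rightarrow> 'a)" where
  "learned I L xs n = L (history I L xs n)"

text \<open>Cumulative cost of a fixed policy p on the M = N * T cost-sensitive examples
  generated from the first N structured examples.\<close>
definition cs_cost ::
  "('e, 's, 'a, 'f) l2s \<Rightarrow> ('f, 'a) learner \<Rightarrow> (nat \<Rightarrow> 'e) \<Rightarrow> nat \<Rightarrow> ('f \<Rightarrow> 'a) \<Rightarrow> real" where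
  "cs_cost I L xs N p =
     (\<Sum>n<N. \<Sum>t<l2s_T I.
        (let ex = cs_example I (xs n) (learned I L xs n) t in snd ex (p (fst ex))))"

definition cs_learner_cost ::
  "('e, 's, 'a, 'f) l2s \<Rightarrow> ('f, 'a) learner \<Rightarrow> (nat \<Rightarrow> 'e) \<Rightarrow> nat \<Rightarrow> real" where
  "cs_learner_cost I L xs N =
     (\<Sum>n<N. \<Sum>t<l2s_T I.
        (let ex = cs_example I (xs n) (learned I L xs n) t
         in snd ex (learned I L xs n (fst ex))))"

definition regret_CS ::
  "('e, 's, 'a, 'f) l2s \<Rightarrow> ('f, 'a) learner \<Rightarrow> (nat \<Rightarrow> 'e) \<Rightarrow> nat \<Rightarrow> real" where
  "regret_CS I L xs N = cs_learner_cost I L xs N - (INF p\<in>l2s_Pi I. cs_cost I L xs N p)"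

end

theory Submission
  imports Defs
begin

text \<open>States form a complete binary tree in heap numbering (action a leads from s to
  2s + 1 + a); after T = 2 steps the leaves are 3..6, and only leaf 5, reached by the
  actions 1 then 0, has loss 0. The reference policy always plays 1, so every roll-out
  from the roll-in states 0 and 1 of the learner playing 0 ends in a bad leaf: all
  cost-sensitive examples it sees have zero cost, hence a constant learner playing 0
  has zero cost-sensitive regret. Yet that policy ends in leaf 3, while deviating to
  action 1 at the first step leads to leaf 5, gaining the full loss B.\<close>

lemma cs_example_cost_nonneg:
  assumes "wf_l2s I"
    and "a \<in> l2s_acts I e (steps (l2s_trans I e) (act I e \<pi>) t (l2s_start I e))"
  shows "0 \<le> snd (cs_example I e \<pi> t) a"
proof -
  define st where "st = steps (l2s_trans I e) (act I e \<pi>) t (l2s_start I e)"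
  define L where "L = (\<lambda>a. l2s_loss I e (steps (l2s_trans I e) (l2s_ref I e) (l2s_T I - Suc t)
                                  (l2s_trans I e st a)))"
  have "finite (l2s_acts I e st)" using assms(1) by (simp add: wf_l2s_def)
  then have "Min (L ` l2s_acts I e st) \<le> L a"
    using assms(2) by (simp add: st_def)
  then show ?thesis unfolding L_def st_def by (simp add: cs_example_def Let_def)
qed

lemma cs_cost_nonneg:
  assumes "wf_l2s I" and "p \<in> l2s_Pi I"
  shows "0 \<le> cs_cost I L xs N p"
  unfolding cs_cost_def Let_def
proof (intro sum_nonneg)
  fix n t
  let ?\<pi> = "learned I L xs n"
  have "p (l2s_feat I (xs n) (steps (l2s_trans I (xs n)) (act I (xs n) ?\<pi>) t (l2s_start I (xs n))))
          \<in> l2s_acts I (xs n) (steps (l2s_trans I (xs n)) (act I (xs n) ?\<pi>) t (l2s_start I (xs n)))"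
    using assms by (simp add: wf_l2s_def)
  then show "0 \<le> snd (cs_example I (xs n) ?\<pi> t) (p (fst (cs_example I (xs n) ?\<pi> t)))"
    using cs_example_cost_nonneg [OF assms(1)] by (simp add: cs_example_def Let_def)
qed

lemma learned_const [simp]: "learned I (\<lambda>_. p) xs = (\<lambda>_. p)"
  by (simp add: learned_def fun_eq_iff)

text \<open>Costs are nonnegative, so p attains the infimum over the policy class.\<close>
lemma regret_CS_const_learner:
  assumes "wf_l2s I" and "p \<in> l2s_Pi I" and "cs_cost I (\<lambda>_. p) xs N p = 0"
  shows "regret_CS I (\<lambda>_. p) xs N = 0"
proof -
  have "(INF q\<in>l2s_Pi I. cs_cost I (\<lambda>_. p) xs N q) = 0"
    using assms cs_cost_nonneg [OF assms(1)] by (intro cInf_eq_minimum) auto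
  moreover have "cs_learner_cost I (\<lambda>_. p) xs N = cs_cost I (\<lambda>_. p) xs N p"
    by (simp add: cs_learner_cost_def cs_cost_def)
  ultimately show ?thesis using assms(3) by (simp add: regret_CS_def)
qed

lemma J_avg_const: "N \<ge> 1 \<Longrightarrow> J_avg I (\<lambda>_. p) N = J I p"
  by (simp add: J_avg_def)

lemma J_avg_dev_const: "N \<ge> 1 \<Longrightarrow> J_avg_dev I (\<lambda>_. p) N t h = J_dev I p t h"
  by (simp add: J_avg_dev_def)

definition trap_loss :: "real \<Rightarrow> nat \<Rightarrow> nat \<Rightarrow> real" where
  "trap_loss B e s = (if s = 5 then 0 else max B 0)"

definition trap :: "real \<Rightarrow> (nat, nat, nat, nat) l2s" where
  "trap B = \<lparr> l2s_D = return_pmf 0, l2s_start = (\<lambda>_. 0), l2s_acts = (\<lambda>_ _. {0, 1}),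
     l2s_trans = (\<lambda>_ s a. 2 * s + 1 + a), l2s_T = 2, l2s_loss = trap_loss B,
     l2s_feat = (\<lambda>_ s. s), l2s_Pi = {(\<lambda>_. 0), (\<lambda>_. 1)}, l2s_ref = (\<lambda>_ _. 1) \<rparr>"

lemma wf_trap: "wf_l2s (trap B)"
  by (auto simp: wf_l2s_def trap_def trap_loss_def)

lemma cs_cost_trap: "cs_cost (trap B) (\<lambda>_ _. 0) xs N (\<lambda>_. 0) = 0"
proof -
  have "{..<l2s_T (trap B)} = {0, 1}" by (auto simp: trap_def)
  then show ?thesis
    by (simp add: cs_cost_def cs_example_def trap_def act_def trap_loss_def eval_nat_numeral)
qed

lemma J_trap: "J (trap B) (\<lambda>_. 0) = max B 0"
  by (simp add: J_def end_state_def trap_def act_def trap_loss_def numeral_2_eq_2)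

lemma J_dev_trap: "J_dev (trap B) (\<lambda>_. 0) 0 (\<lambda>_. 1) = 0"
  by (simp add: J_dev_def dev_end_state_def trap_def act_def trap_loss_def eval_nat_numeral)

theorem theorem2:
  shows "\<forall>B::real. \<exists>(I :: (nat, nat, nat, nat) l2s) (L :: (nat, nat) learner).
     wf_l2s I \<and>
     (\<forall>h. L h \<in> l2s_Pi I) \<and>
     (\<forall>xs. (\<forall>n. xs n \<in> set_pmf (l2s_D I)) \<longrightarrow>
        (\<lambda>N. regret_CS I L xs N) \<in> o(\<lambda>N. real (N * l2s_T I)) \<and>
        (\<forall>N\<ge>1. \<exists>t<l2s_T I. \<exists>h\<in>l2s_Pi I.
            J_avg I (learned I L xs) N - J_avg_dev I (learned I L xs) N t h \<ge> B))"
proof (intro allI exI [of _ "trap _"] exI [of _ "\<lambda>_ _. 0"] conjI impI)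
  fix B :: real and xs :: "nat \<Rightarrow> nat"
  have zero_in_Pi: "(\<lambda>_. 0) \<in> l2s_Pi (trap B)" and one_in_Pi: "(\<lambda>_. 1) \<in> l2s_Pi (trap B)"
    by (simp_all add: trap_def)
  show "wf_l2s (trap B)" by (rule wf_trap)
  show "\<And>h. (\<lambda>_. 0) \<in> l2s_Pi (trap B)" by (rule zero_in_Pi)
  have "regret_CS (trap B) (\<lambda>_ _. 0) xs = (\<lambda>_. 0)"
    using regret_CS_const_learner [OF wf_trap zero_in_Pi cs_cost_trap] by (simp add: fun_eq_iff)
  then show "regret_CS (trap B) (\<lambda>_ _. 0) xs \<in> o(\<lambda>N. real (N * l2s_T (trap B)))"
    by simp
  fix N :: nat assume "N \<ge> 1"
  then have "J_avg (trap B) (learned (trap B) (\<lambda>_ _. 0) xs) N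
        - J_avg_dev (trap B) (learned (trap B) (\<lambda>_ _. 0) xs) N 0 (\<lambda>_. 1) = max B 0"
    by (simp add: J_avg_const J_avg_dev_const J_trap J_dev_trap [simplified])
  moreover have "0 < l2s_T (trap B)" by (simp add: trap_def)
  ultimately show "\<exists>t<l2s_T (trap B). \<exists>h\<in>l2s_Pi (trap B).
        J_avg (trap B) (learned (trap B) (\<lambda>_ _. 0) xs) N
        - J_avg_dev (trap B) (learned (trap B) (\<lambda>_ _. 0) xs) N t h \<ge> B"
    using one_in_Pi by (metis max.cobounded1)
qed

end
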